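(* Let $G=(\mathcal V,\mathcal E,a)$ and $G'=(\mathcal V',\mathcal E',a')$ be finite undirected graphs with discrete node attributes. For any $u\in\mathcal V$, $u'\in\mathcal V'$ and any $k\ge0$ such that $\kappa^{(k)}_{\mathrm{walk}}(u,u)>0$ and $\kappa^{(k)}_{\mathrm{walk}}(u',u')>0$, $$d_{\kappa^{(k)}_{\mathrm{subtree}}}(u,u')\ \ge\ d_{\hat\kappa^{(k)}_{\mathrm{walk}}}(u,u').$$
   Context: $\mathcal N(u)$ denotes neighbors; $\delta$ is the Dirac kernel. Walks: $\mathcal W_k(G,u)$ is the set of sequences $(p_0=u,\dots,p_k)$ with consecutive nodes adjacent (repetitions allowed), $a(p)=(a(p_0),\dots,a(p_k))$. Walk kernel: $\kappa^{(k)}_{\mathrm{walk}}(u,u')=\sum_{p\in\mathcal W_k(G,u)}\sum_{p'\in\mathcal W_k(G',u')}\delta(a(p),a'(p'))$. The normalized kernel of $\kappa$ is $\hat\kappa(u,u')=\kappa(u,u')/\sqrt{\kappa(u,u)\kappa(u',u')}$. Weisfeiler–Lehman relabeling: $a_0=a$, $a_{i}(u)=f\big(a_{i-1}(u),\{\!\{a_{i-1}(v):v\in\mathcal N(u)\}\!\}\big)$ with $f$ injective and shared by both graphs; $\kappa^{(k)}_{\mathrm{subtree}}(u,u')=\delta(a_k(u),a'_k(u'))$. For a kernel $\kappa$, $d_\kappa(u,u')=\sqrt{\kappa(u,u)+\kappa(u',u')-2\kappa(u,u')}$ (the distance between feature-map images). *)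

theory Defs
  imports Complex_Main "HOL-Library.Multiset"
begin

definition undirected_graph :: "'v set \<Rightarrow> ('v \<Rightarrow> 'v \<Rightarrow> bool) \<Rightarrow> bool" where
  "undirected_graph V E \<longleftrightarrow> finite V \<and> (\<forall>x y. E x y \<longrightarrow> E y x) \<and>
     (\<forall>x y. E x y \<longrightarrow> x \<in> V \<and> y \<in> V)"

definition neighbors :: "'v set \<Rightarrow> ('v \<Rightarrow> 'v \<Rightarrow> bool) \<Rightarrow> 'v \<Rightarrow> 'v set" where
  "neighbors V E u = {v \<in> V. E u v}"

definition walks :: "'v set \<Rightarrow> ('v \<Rightarrow> 'v \<Rightarrow> bool) \<Rightarrow> 'v \<Rightarrow> nat \<Rightarrow> 'v list set" where
  "walks V E u k = {p. length p = Suc k \<and> p ! 0 = u \<and> set p \<subseteq> V \<and>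
                       (\<forall>i<k. E (p ! i) (p ! Suc i))}"

definition walk_kernel ::
  "'v set \<Rightarrow> ('v \<Rightarrow> 'v \<Rightarrow> bool) \<Rightarrow> ('v \<Rightarrow> 'c) \<Rightarrow>
   'w set \<Rightarrow> ('w \<Rightarrow> 'w \<Rightarrow> bool) \<Rightarrow> ('w \<Rightarrow> 'c) \<Rightarrow> nat \<Rightarrow> 'v \<Rightarrow> 'w \<Rightarrow> real" where
  "walk_kernel V E a V' E' a' k u u' =
     (\<Sum>p\<in>walks V E u k. \<Sum>p'\<in>walks V' E' u' k.
        (if map a p = map a' p' then 1 else 0))"

definition normalized :: "real \<Rightarrow> real \<Rightarrow> real \<Rightarrow> real" where
  "normalized kuu' kuu ku'u' = kuu' / sqrt (kuu * ku'u')"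

definition kernel_dist :: "real \<Rightarrow> real \<Rightarrow> real \<Rightarrow> real" where
  "kernel_dist kuu ku'u' kuu' = sqrt (kuu + ku'u' - 2 * kuu')"

fun wl :: "('c \<Rightarrow> 'c multiset \<Rightarrow> 'c) \<Rightarrow> 'v set \<Rightarrow> ('v \<Rightarrow> 'v \<Rightarrow> bool) \<Rightarrow> ('v \<Rightarrow> 'c)
           \<Rightarrow> nat \<Rightarrow> 'v \<Rightarrow> 'c" where
  "wl f V E a 0 u = a u"
| "wl f V E a (Suc i) u =
     f (wl f V E a i u) (image_mset (wl f V E a i) (mset_set (neighbors V E u)))"

definition subtree_kernel ::
  "('c \<Rightarrow> 'c multiset \<Rightarrow> 'c) \<Rightarrow>
   'v set \<Rightarrow> ('v \<Rightarrow> 'v \<Rightarrow> bool) \<Rightarrow> ('v \<Rightarrow> 'c) \<Rightarrow>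
   'w set \<Rightarrow> ('w \<Rightarrow> 'w \<Rightarrow> bool) \<Rightarrow> ('w \<Rightarrow> 'c) \<Rightarrow> nat \<Rightarrow> 'v \<Rightarrow> 'w \<Rightarrow> real" where
  "subtree_kernel f V E a V' E' a' k u u' =
     (if wl f V E a k u = wl f V' E' a' k u' then 1 else 0)"

end

theory Submission
  imports Defs
begin

text \<open>Since the relabelling function is injective, the WL label of u after k rounds encodes
the depth-k unfolding tree of u, and the number of walks of length k from u with a given
label sequence can be read off that tree. Hence nodes with equal WL labels have identical
walk-count feature vectors, so their normalized walk kernel is 1 and both distances vanish.
If the labels differ, the subtree distance is the maximal value \<open>sqrt 2\<close>, while the
normalized walk kernel is nonnegative, so the walk distance is at most \<open>sqrt 2\<close>.\<close>

lemma mem_walks_Suc_iff: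
  "p \<in> walks V E u (Suc k) \<longleftrightarrow>
     (\<exists>v q. p = u # q \<and> u \<in> V \<and> E u v \<and> q \<in> walks V E v k)"
proof
  assume p: "p \<in> walks V E u (Suc k)"
  then obtain q where pq: "p = u # q"
    unfolding walks_def by (cases p) auto
  with p have "q \<noteq> []" by (auto simp: walks_def)
  then have hd_q: "q ! 0 = hd q" by (simp add: hd_conv_nth)
  have step: "E (p ! i) (p ! Suc i)" if "i < Suc k" for i
    using p that by (auto simp: walks_def)
  have "E u (hd q)"
    using step[of 0] pq hd_q by simp
  moreover have "\<forall>i<k. E (q ! i) (q ! Suc i)"
    using step pq by (metis Suc_mono nth_Cons_Suc)
  ultimately show "\<exists>v q. p = u # q \<and> u \<in> V \<and> E u v \<and> q \<in> walks V E v k"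
    using p pq hd_q by (auto simp: walks_def)
next
  assume "\<exists>v q. p = u # q \<and> u \<in> V \<and> E u v \<and> q \<in> walks V E v k"
  then obtain v q where "p = u # q" "u \<in> V" "E u v" "q \<in> walks V E v k" by blast
  then show "p \<in> walks V E u (Suc k)"
    by (auto simp: walks_def nth_Cons split: nat.split)
qed

lemma walks_start_in: "p \<in> walks V E u k \<Longrightarrow> u \<in> V"
  by (cases p) (auto simp: walks_def)

lemma walks_hd: "p \<in> walks V E u k \<Longrightarrow> hd p = u"
  by (cases p) (auto simp: walks_def)

lemma Nil_notin_walks: "[] \<notin> walks V E u k"
  by (simp add: walks_def)

lemma walks_0: "u \<in> V \<Longrightarrow> walks V E u 0 = {[u]}"
  by (auto simp: walks_def length_Suc_conv)

lemma walks_Suc: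
  "u \<in> V \<Longrightarrow> walks V E u (Suc k) = (\<Union>v\<in>neighbors V E u. (#) u ` walks V E v k)"
  by (rule set_eqI) (auto simp: mem_walks_Suc_iff neighbors_def dest: walks_start_in)

lemma finite_walks: "finite V \<Longrightarrow> finite (walks V E u k)"
  by (rule finite_subset[OF _ finite_lists_length_eq[of V "Suc k"]]) (auto simp: walks_def)

definition walk_count ::
  "'v set \<Rightarrow> ('v \<Rightarrow> 'v \<Rightarrow> bool) \<Rightarrow> ('v \<Rightarrow> 'c) \<Rightarrow> 'v \<Rightarrow> nat \<Rightarrow> 'c list \<Rightarrow> nat" where
  "walk_count V E a u k s = card {p \<in> walks V E u k. map a p = s}"

lemma walk_count_0: "u \<in> V \<Longrightarrow> walk_count V E a u 0 s = (if s = [a u] then 1 else 0)"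
  by (simp add: walk_count_def walks_0 Collect_conv_if)

lemma walk_count_Nil: "walk_count V E a u k [] = 0"
  by (simp add: walk_count_def Nil_notin_walks)

lemma walk_count_Suc_Cons:
  assumes "finite V" and "u \<in> V"
  shows "walk_count V E a u (Suc k) (c # t) =
           (if a u = c then (\<Sum>v\<in>neighbors V E u. walk_count V E a v k t) else 0)"
proof (cases "a u = c")
  case True
  let ?W = "\<lambda>v. {q \<in> walks V E v k. map a q = t}"
  have "{p \<in> walks V E u (Suc k). map a p = c # t} = (\<Union>v\<in>neighbors V E u. (#) u ` ?W v)"
    using True by (auto simp: walks_Suc[OF \<open>u \<in> V\<close>])
  moreover have "card (\<Union>v\<in>neighbors V E u. (#) u ` ?W v) = (\<Sum>v\<in>neighbors V E u. card (?W v))"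
    using \<open>finite V\<close> finite_walks[OF \<open>finite V\<close>]
    by (subst card_UN_disjoint) (auto simp: neighbors_def card_image dest: walks_start_in walks_hd)
  ultimately show ?thesis
    using True by (simp add: walk_count_def)
next
  case False
  then have "{p \<in> walks V E u (Suc k). map a p = c # t} = {}"
    by (auto simp: walks_Suc[OF \<open>u \<in> V\<close>])
  with False show ?thesis
    unfolding walk_count_def by (metis card.empty)
qed

text \<open>Decoding from a WL label, given a left inverse \<open>g\<close> of the relabelling function:
\<open>wl_root g k\<close> recovers the original attribute after \<open>k\<close> rounds, and
\<open>walk_count_of_label g k c s\<close> counts the walks with label sequence \<open>s\<close> in the unfolding tree
encoded by \<open>c\<close>.\<close>

fun wl_root :: "('c \<Rightarrow> 'c \<times> 'c multiset) \<Rightarrow> nat \<Rightarrow> 'c \<Rightarrow> 'c" where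
  "wl_root g 0 c = c"
| "wl_root g (Suc k) c = wl_root g k (fst (g c))"

fun walk_count_of_label :: "('c \<Rightarrow> 'c \<times> 'c multiset) \<Rightarrow> nat \<Rightarrow> 'c \<Rightarrow> 'c list \<Rightarrow> nat" where
  "walk_count_of_label g 0 c s = (if s = [c] then 1 else 0)"
| "walk_count_of_label g (Suc k) c [] = 0"
| "walk_count_of_label g (Suc k) c (c0 # t) =
     (if wl_root g k (fst (g c)) = c0
      then sum_mset (image_mset (\<lambda>d. walk_count_of_label g k d t) (snd (g c))) else 0)"

lemma wl_root_wl:
  assumes "\<And>x M. g (f x M) = (x, M)"
  shows "wl_root g k (wl f V E a k u) = a u"
  by (induction k arbitrary: u) (simp_all add: assms)

lemma walk_count_eq_walk_count_of_label:
  assumes "finite V" and g: "\<And>x M. g (f x M) = (x, M)" and "u \<in> V"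
  shows "walk_count V E a u k s = walk_count_of_label g k (wl f V E a k u) s"
  using \<open>u \<in> V\<close>
proof (induction k arbitrary: u s)
  case 0
  then show ?case by (simp add: walk_count_0)
next
  case (Suc k)
  show ?case
  proof (cases s)
    case Nil
    then show ?thesis by (simp add: walk_count_Nil)
  next
    case (Cons c t)
    have "(\<Sum>v\<in>neighbors V E u. walk_count V E a v k t)
        = (\<Sum>v\<in>neighbors V E u. walk_count_of_label g k (wl f V E a k v) t)"
      using Suc.IH by (intro sum.cong) (auto simp: neighbors_def)
    also have "\<dots> = sum_mset (image_mset (\<lambda>d. walk_count_of_label g k d t)
                      (image_mset (wl f V E a k) (mset_set (neighbors V E u))))"
      by (simp add: sum_unfold_sum_mset image_mset.compositionality o_def)
    finally show ?thesis
      using Cons Suc.prems by (simp add: walk_count_Suc_Cons[OF \<open>finite V\<close>] g wl_root_wl[OF g])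
  qed
qed

lemma walk_count_eq_if_wl_eq:
  assumes "finite V" "finite V'" "inj (\<lambda>(x, M). f x M)" "u \<in> V" "u' \<in> V'"
    and "wl f V E a k u = wl f V' E' a' k u'"
  shows "walk_count V' E' a' u' k = walk_count V E a u k"
proof -
  define g where "g = inv (\<lambda>(x, M). f x M)"
  have g: "g (f x M) = (x, M)" for x M
    using inv_f_f[OF \<open>inj (\<lambda>(x, M). f x M)\<close>, of "(x, M)"] by (simp add: g_def)
  have "walk_count V' E' a' u' k s = walk_count V E a u k s" for s
    using assms walk_count_eq_walk_count_of_label[OF _ g] by metis
  then show ?thesis by blast
qed

lemma walk_kernel_eq_sum_walk_count_left:
  "finite V' \<Longrightarrow> walk_kernel V E a V' E' a' k u u' =
     (\<Sum>p\<in>walks V E u k. real (walk_count V' E' a' u' k (map a p)))"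
  unfolding walk_kernel_def walk_count_def
  by (intro sum.cong refl) (simp add: sum.If_cases finite_walks Int_def eq_commute)

lemma walk_kernel_eq_sum_walk_count_right:
  "finite V \<Longrightarrow> walk_kernel V E a V' E' a' k u u' =
     (\<Sum>p'\<in>walks V' E' u' k. real (walk_count V E a u k (map a' p')))"
  unfolding walk_kernel_def walk_count_def
  by (subst sum.swap) (intro sum.cong refl, simp add: sum.If_cases finite_walks Int_def)

lemma walk_kernel_eq_self_if_walk_count_eq:
  assumes "finite V" "finite V'" and "walk_count V' E' a' u' k = walk_count V E a u k"
  shows "walk_kernel V E a V' E' a' k u u' = walk_kernel V E a V E a k u u"
    and "walk_kernel V E a V' E' a' k u u' = walk_kernel V' E' a' V' E' a' k u' u'"
proof -
  show "walk_kernel V E a V' E' a' k u u' = walk_kernel V E a V E a k u u"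
    using assms by (simp add: walk_kernel_eq_sum_walk_count_left)
  show "walk_kernel V E a V' E' a' k u u' = walk_kernel V' E' a' V' E' a' k u' u'"
    using assms(1,2) assms(3)[symmetric] by (simp add: walk_kernel_eq_sum_walk_count_right)
qed

lemma walk_kernel_nonneg: "walk_kernel V E a V' E' a' k u u' \<ge> 0"
  unfolding walk_kernel_def by (intro sum_nonneg) auto

lemma normalized_self: "x > 0 \<Longrightarrow> normalized x x x = 1"
  by (simp add: normalized_def)

theorem corollary1:
  fixes V :: "'v set" and E :: "'v \<Rightarrow> 'v \<Rightarrow> bool" and a :: "'v \<Rightarrow> 'c"
    and V' :: "'w set" and E' :: "'w \<Rightarrow> 'w \<Rightarrow> bool" and a' :: "'w \<Rightarrow> 'c"
    and f :: "'c \<Rightarrow> 'c multiset \<Rightarrow> 'c" and k :: nat and u :: 'v and u' :: 'w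
  assumes G: "undirected_graph V E" and G': "undirected_graph V' E'"
    and f_inj: "inj (\<lambda>(x, M). f x M)"
    and u: "u \<in> V" and u': "u' \<in> V'"
    and pos: "walk_kernel V E a V E a k u u > 0"
    and pos': "walk_kernel V' E' a' V' E' a' k u' u' > 0"
  shows "kernel_dist (subtree_kernel f V E a V E a k u u)
                     (subtree_kernel f V' E' a' V' E' a' k u' u')
                     (subtree_kernel f V E a V' E' a' k u u')
         \<ge> kernel_dist
             (normalized (walk_kernel V E a V E a k u u)
                (walk_kernel V E a V E a k u u) (walk_kernel V E a V E a k u u))
             (normalized (walk_kernel V' E' a' V' E' a' k u' u')
                (walk_kernel V' E' a' V' E' a' k u' u') (walk_kernel V' E' a' V' E' a' k u' u'))
             (normalized (walk_kernel V E a V' E' a' k u u')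
                (walk_kernel V E a V E a k u u) (walk_kernel V' E' a' V' E' a' k u' u'))"
proof (cases "wl f V E a k u = wl f V' E' a' k u'")
  case True
  have "finite V" "finite V'" using G G' by (simp_all add: undirected_graph_def)
  with True walk_count_eq_if_wl_eq[OF _ _ f_inj u u'] walk_kernel_eq_self_if_walk_count_eq
  have "walk_kernel V E a V' E' a' k u u' = walk_kernel V E a V E a k u u"
    and "walk_kernel V E a V' E' a' k u u' = walk_kernel V' E' a' V' E' a' k u' u'"
    by metis+
  with True pos pos' show ?thesis
    by (simp add: normalized_self subtree_kernel_def kernel_dist_def)
next
  case False
  have "normalized (walk_kernel V E a V' E' a' k u u')
          (walk_kernel V E a V E a k u u) (walk_kernel V' E' a' V' E' a' k u' u') \<ge> 0"
    unfolding normalized_def by (simp add: walk_kernel_nonneg)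
  with False pos pos' show ?thesis
    by (simp add: normalized_self subtree_kernel_def kernel_dist_def)
qed

end
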